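(* Let $\alpha=(\alpha_1,\dots,\alpha_n)$ be a composition, $k\ge 0$ an integer, and $\lambda$ a partition with $\lambda_1-k\le n$. Let $\mathcal{T}$ be a semistandard Young tableau of shape $\mathcal{S}(\lambda,\alpha;k)$ whose reading word is lattice. Then every entry in the first row of the foundation $\lambda$ of $\mathcal{T}$ belongs to the set \[R_{\alpha,k}=\Big\{1+\sum_{i=1}^{j}\alpha_{n+1-i}\ :\ j=1,2,\dots,n\Big\}\cup\begin{cases}\{1\}&\text{if }k>0,\\ \emptyset&\text{if }k=0.\end{cases}\] Furthermore, the value $1$ occurs at most $k$ times in that row, and every other value occurs at most once in that row.
   Context: Diagrams use English convention: boxes $(r,c)$ with row index $r$ increasing downward and column index $c$ increasing rightward. For a composition $\alpha=(\alpha_1,\dots,\alpha_n)$ (positive parts), $|\alpha|=\sum_i\alpha_i$, and $\Delta_\alpha$ is the $180^\circ$ rotation of the Ferrers diagram of the partition $(n^{\alpha_n},(n-1)^{\alpha_{n-1}},\dots,1^{\alpha_1})$; concretely $\Delta_\alpha$ occupies rows $1,\dots,|\alpha|$, each row right-justified ending in column $n$, row lengths weakly increasing downward, with exactly $\alpha_i$ rows of length $i$. For $k\ge0$ and a partition $\lambda$ with $\lambda_1-k\le n$, $\mathcal{S}(\lambda,\alpha;k)$ (a "fat staircase with bad foundation") is the diagram consisting of $\Delta_\alpha$ together with a copy of the Ferrers diagram of $\lambda$ (the foundation) placed so that row $r$ of $\lambda$ occupies row $|\alpha|+r$, columns $1-k$ through $\lambda_r-k$; i.e. the first row of $\lambda$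 starts one row below and $k$ columns to the left of the bottom-left box of $\Delta_\alpha$. A tableau is a filling of the boxes with positive integers; it is semistandard (SSYT) if rows weakly increase left to right and columns strictly increase top to bottom. The reading word reads rows right to left, from the top row to the bottom row. A sequence is lattice if, for every $j\ge1$ and every initial segment, the number of $j$'s is at least the number of $(j+1)$'s. *)

theory Defs
  imports Main "HOL-Library.Product_Lexorder"
begin

(* Cells are pairs (row, column) of integers, English convention. *)
type_synonym cell = "int \<times> int"

definition is_composition :: "nat list \<Rightarrow> bool" where
  "is_composition \<alpha> \<longleftrightarrow> (\<forall>a\<in>set \<alpha>. 0 < a)"

definition is_partition :: "nat list \<Rightarrow> bool" where
  "is_partition lam \<longleftrightarrow> sorted (rev lam) \<and> (\<forall>x\<in>set lam. 0 < x)"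

definition stair_row_lengths :: "nat list \<Rightarrow> nat list" where
  "stair_row_lengths \<alpha> = concat (map (\<lambda>i. replicate (\<alpha> ! (i - 1)) i) [1..<length \<alpha> + 1])"

definition Delta :: "nat list \<Rightarrow> cell set" where
  "Delta \<alpha> = {(r, c). 1 \<le> r \<and> r \<le> int (sum_list \<alpha>) \<and> c \<le> int (length \<alpha>)
       \<and> int (length \<alpha>) + 1 - int (stair_row_lengths \<alpha> ! nat (r - 1)) \<le> c}"

definition foundation :: "nat list \<Rightarrow> nat list \<Rightarrow> nat \<Rightarrow> cell set" where
  "foundation lam \<alpha> k = {(r, c). 1 \<le> r - int (sum_list \<alpha>) \<and> r - int (sum_list \<alpha>) \<le> int (length lam)
       \<and> 1 - int k \<le> c \<and> c \<le> int (lam ! nat (r - int (sum_list \<alpha>) - 1)) - int k}"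

definition fat_staircase :: "nat list \<Rightarrow> nat list \<Rightarrow> nat \<Rightarrow> cell set" where
  "fat_staircase lam \<alpha> k = Delta \<alpha> \<union> foundation lam \<alpha> k"

definition is_SSYT :: "cell set \<Rightarrow> (cell \<Rightarrow> nat) \<Rightarrow> bool" where
  "is_SSYT D T \<longleftrightarrow>
     (\<forall>x\<in>D. 0 < T x) \<and>
     (\<forall>r c c'. (r, c) \<in> D \<and> (r, c') \<in> D \<and> c < c' \<longrightarrow> T (r, c) \<le> T (r, c')) \<and>
     (\<forall>r r' c. (r, c) \<in> D \<and> (r', c) \<in> D \<and> r < r' \<longrightarrow> T (r, c) < T (r', c))"

(* reading word: rows top to bottom, each row read right to left *)
definition reading_word :: "cell set \<Rightarrow> (cell \<Rightarrow> nat) \<Rightarrow> nat list" where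
  "reading_word D T = map (\<lambda>(r, c'). T (r, - c')) (sorted_list_of_set ((\<lambda>(r, c). (r, - c)) ` D))"

definition is_lattice :: "nat list \<Rightarrow> bool" where
  "is_lattice w \<longleftrightarrow> (\<forall>m \<le> length w. \<forall>j \<ge> 1.
      count_list (take m w) (Suc j) \<le> count_list (take m w) j)"

definition R_set :: "nat list \<Rightarrow> nat \<Rightarrow> nat set" where
  "R_set \<alpha> k = {1 + (\<Sum>i=1..j. \<alpha> ! (length \<alpha> - i)) | j. 1 \<le> j \<and> j \<le> length \<alpha>}
                \<union> (if k > 0 then {1} else {})"

end

theory Submission
  imports Defs
begin

text \<open>Column strictness forces each column of \<open>\<Delta>\<^sub>\<alpha>\<close> to contain at least
  \<open>1, 2, \<dots>\<close> from the top down, and the lattice condition forces equality: if the first cell in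
  reading order whose entry is too large carries \<open>j + 1\<close>, then every earlier \<open>j\<close> lies directly
  above an earlier \<open>j + 1\<close>, so the prefix of the reading word ending there has more \<open>j + 1\<close>'s
  than \<open>j\<close>'s. Hence \<open>\<Delta>\<^sub>\<alpha>\<close> contains exactly as many entries \<open>u\<close> as it has columns of
  height at least \<open>u\<close>, and these heights \<open>\<alpha>\<^sub>n\<^sub>+\<^sub>1\<^sub>-\<^sub>j + \<dots> + \<alpha>\<^sub>n\<close> are strictly increasing.

  Now let \<open>w \<ge> 2\<close> occur in the first foundation row. Applying the lattice condition just after
  its leftmost occurrence gives (number of \<open>w\<close>'s in \<open>\<Delta>\<^sub>\<alpha>\<close>) + (number of \<open>w\<close>'s in the row)
  \<open>\<le>\<close> (number of \<open>w - 1\<close>'s in \<open>\<Delta>\<^sub>\<alpha>\<close>), so \<open>w\<close> occurs in the row at most as often as some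
  column has height exactly \<open>w - 1\<close>: at most once, and only if \<open>w \<in> R\<^sub>\<alpha>\<^sub>,\<^sub>k\<close>. Entries \<open>1\<close> can
  only sit in the \<open>k\<close> cells left of column \<open>1\<close>, since every other cell of that row lies below a
  column of \<open>\<Delta>\<^sub>\<alpha>\<close>.\<close>

definition reading_key :: "cell \<Rightarrow> cell" where
  "reading_key x = (fst x, - snd x)"

lemma inj_reading_key: "inj reading_key"
  unfolding reading_key_def inj_def by auto

lemma reading_key_le_iff:
  "reading_key (r', c') \<le> reading_key (r, c) \<longleftrightarrow> r' < r \<or> (r' = r \<and> c \<le> c')"
  by (auto simp: reading_key_def)

lemma reading_key_less_iff:
  "reading_key (r', c') < reading_key (r, c) \<longleftrightarrow> r' < r \<or> (r' = r \<and> c < c')"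
  by (auto simp: reading_key_def less_prod_def)

lemma sorted_takeWhile_le_eq_filter:
  "sorted xs \<Longrightarrow> takeWhile (\<lambda>z. z \<le> (a::'a::linorder)) xs = filter (\<lambda>z. z \<le> a) xs"
  by (induction xs) (auto intro: order.trans simp: empty_filter_conv)

lemma lattice_count_prefix:
  assumes fin: "finite D" and lat: "is_lattice (reading_word D T)" and j: "1 \<le> j"
  shows "card {y\<in>D. reading_key y \<le> a \<and> T y = Suc j} \<le> card {y\<in>D. reading_key y \<le> a \<and> T y = j}"
proof -
  define L where "L = sorted_list_of_set (reading_key ` D)"
  define g where "g = (\<lambda>(r, c'). T (r, - c'))"
  have g_key: "g (reading_key y) = T y" for y
    unfolding g_def reading_key_def by (cases y) auto
  have "(\<lambda>(r::int, c::int). (r, -c)) = reading_key"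
    by (auto simp: reading_key_def fun_eq_iff)
  then have word: "reading_word D T = map g L"
    unfolding reading_word_def L_def g_def by simp
  define m where "m = length (takeWhile (\<lambda>z. z \<le> a) L)"
  have prefix: "take m L = filter (\<lambda>z. z \<le> a) L"
    unfolding m_def L_def
    by (metis sorted_takeWhile_le_eq_filter takeWhile_eq_take sorted_sorted_list_of_set)
  have count: "count_list (take m (map g L)) v = card {y\<in>D. reading_key y \<le> a \<and> T y = v}" for v
  proof -
    have "count_list (take m (map g L)) v = length (filter (\<lambda>z. g z = v) (filter (\<lambda>z. z \<le> a) L))"
      by (simp add: count_list_eq_length_filter take_map prefix filter_map comp_def eq_commute)
    also have "\<dots> = card (set (filter (\<lambda>z. g z = v) (filter (\<lambda>z. z \<le> a) L)))"
      by (metis distinct_card distinct_filter distinct_sorted_list_of_set L_def)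
    also have "set (filter (\<lambda>z. g z = v) (filter (\<lambda>z. z \<le> a) L)) = reading_key ` {y\<in>D. reading_key y \<le> a \<and> T y = v}"
      using fin g_key unfolding L_def by auto
    also have "card \<dots> = card {y\<in>D. reading_key y \<le> a \<and> T y = v}"
      using inj_reading_key by (simp add: card_image inj_on_subset)
    finally show ?thesis .
  qed
  have "m \<le> length (reading_word D T)"
    unfolding word m_def by (simp add: length_takeWhile_le)
  with lat j show ?thesis
    unfolding is_lattice_def count[symmetric] word by blast
qed

lemma stair_row_lengths_Nil: "stair_row_lengths [] = []"
  by (simp add: stair_row_lengths_def)

lemma stair_row_lengths_snoc:
  "stair_row_lengths (\<alpha> @ [a]) = stair_row_lengths \<alpha> @ replicate a (length \<alpha> + 1)"
proof -
  have upt_snoc: "[1..<length (\<alpha> @ [a]) + 1] = [1..<length \<alpha> + 1] @ [length \<alpha> + 1]"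
    by simp
  have map_eq: "map (\<lambda>i. replicate ((\<alpha> @ [a]) ! (i - 1)) i) [1..<length \<alpha> + 1]
      = map (\<lambda>i. replicate (\<alpha> ! (i - 1)) i) [1..<length \<alpha> + 1]"
    by (rule map_cong) (auto simp: nth_append)
  have "stair_row_lengths (\<alpha> @ [a])
      = concat (map (\<lambda>i. replicate ((\<alpha> @ [a]) ! (i - 1)) i) ([1..<length \<alpha> + 1] @ [length \<alpha> + 1]))"
    unfolding stair_row_lengths_def upt_snoc ..
  also have "\<dots> = concat (map (\<lambda>i. replicate ((\<alpha> @ [a]) ! (i - 1)) i) [1..<length \<alpha> + 1])
      @ replicate a (length \<alpha> + 1)"
    by simp
  finally show ?thesis
    unfolding map_eq stair_row_lengths_def .
qed

lemma length_stair_row_lengths: "length (stair_row_lengths \<alpha>) = sum_list \<alpha>"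
  by (induction \<alpha> rule: rev_induct) (auto simp: stair_row_lengths_Nil stair_row_lengths_snoc)

lemma stair_row_lengths_nth_ge_iff:
  assumes "p < sum_list \<alpha>" and "1 \<le> m"
  shows "m \<le> stair_row_lengths \<alpha> ! p \<longleftrightarrow> sum_list (take (m - 1) \<alpha>) \<le> p"
  using assms
proof (induction \<alpha> arbitrary: p m rule: rev_induct)
  case (snoc a \<alpha>)
  show ?case
  proof (cases "p < sum_list \<alpha>")
    case True
    then have "stair_row_lengths (\<alpha> @ [a]) ! p = stair_row_lengths \<alpha> ! p"
      by (simp add: stair_row_lengths_snoc nth_append length_stair_row_lengths)
    moreover have "\<not> length \<alpha> + 1 \<le> stair_row_lengths \<alpha> ! p"
      using snoc.IH[of p "length \<alpha> + 1"] True by simp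
    ultimately show ?thesis
      using snoc True by (cases "m - 1 \<le> length \<alpha>") auto
  next
    case False
    then have "stair_row_lengths (\<alpha> @ [a]) ! p = length \<alpha> + 1"
      using snoc.prems by (simp add: stair_row_lengths_snoc nth_append length_stair_row_lengths)
    moreover have "sum_list (take (m - 1) \<alpha>) \<le> sum_list \<alpha>"
      by (metis append_take_drop_id le_add1 sum_list_append)
    ultimately show ?thesis
      using snoc.prems False by (cases "m - 1 \<le> length \<alpha>") auto
  qed
qed simp

lemma sum_list_take_strict_mono:
  fixes xs :: "nat list"
  assumes "i < j" and "j \<le> length xs" and "\<forall>a\<in>set xs. 0 < a"
  shows "sum_list (take i xs) < sum_list (take j xs)"
proof -
  have "take j xs = take i xs @ xs ! i # take (j - Suc i) (drop (Suc i) xs)"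
    using assms(1,2)
    by (metis Cons_nth_drop_Suc Suc_diff_Suc order.strict_trans2 take_Suc_Cons take_add le_add_diff_inverse less_imp_le)
  moreover have "0 < xs ! i"
    using assms by simp
  ultimately show ?thesis
    by simp
qed

lemma sum_list_take_mono:
  fixes xs :: "nat list"
  assumes "i \<le> j"
  shows "sum_list (take i xs) \<le> sum_list (take j xs)"
  by (metis assms le_add1 le_add_diff_inverse sum_list_append take_add)

text \<open>Column \<open>j\<close> of \<open>\<Delta>\<^sub>\<alpha>\<close> occupies the bottom \<open>col_height \<alpha> j = \<alpha>\<^sub>n\<^sub>+\<^sub>1\<^sub>-\<^sub>j + \<dots> + \<alpha>\<^sub>n\<close> rows of \<open>\<Delta>\<^sub>\<alpha>\<close>.\<close>

definition col_height :: "nat list \<Rightarrow> nat \<Rightarrow> nat" where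
  "col_height \<alpha> j = sum_list (drop (length \<alpha> - j) \<alpha>)"

lemma sum_list_take_add_col_height:
  "sum_list (take (length \<alpha> - j) \<alpha>) + col_height \<alpha> j = sum_list \<alpha>"
  unfolding col_height_def by (metis append_take_drop_id sum_list_append)

lemma col_height_le_sum_list: "col_height \<alpha> j \<le> sum_list \<alpha>"
  using sum_list_take_add_col_height[of \<alpha> j] by linarith

lemma mem_Delta_iff:
  "(r, c) \<in> Delta \<alpha> \<longleftrightarrow> 1 \<le> c \<and> c \<le> int (length \<alpha>)
     \<and> int (sum_list \<alpha>) - int (col_height \<alpha> (nat c)) < r \<and> r \<le> int (sum_list \<alpha>)"
proof (cases "1 \<le> r \<and> r \<le> int (sum_list \<alpha>) \<and> c \<le> int (length \<alpha>)")
  case True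
  define p where "p = nat (r - 1)"
  define m where "m = nat (int (length \<alpha>) + 1 - c)"
  have p: "p < sum_list \<alpha>" and m: "1 \<le> m"
    using True unfolding p_def m_def by auto
  have "(r, c) \<in> Delta \<alpha> \<longleftrightarrow> m \<le> stair_row_lengths \<alpha> ! p"
    using True unfolding Delta_def p_def m_def by auto
  also have "\<dots> \<longleftrightarrow> sum_list (take (m - 1) \<alpha>) \<le> p"
    using stair_row_lengths_nth_ge_iff[OF p m] .
  also have "\<dots> \<longleftrightarrow> 1 \<le> c \<and> int (sum_list \<alpha>) - int (col_height \<alpha> (nat c)) < r"
  proof (cases "1 \<le> c")
    case True
    then have "m - 1 = length \<alpha> - nat c"
      unfolding m_def by simp
    moreover have "int (sum_list (take (length \<alpha> - nat c) \<alpha>)) + int (col_height \<alpha> (nat c)) = int (sum_list \<alpha>)"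
      using sum_list_take_add_col_height[of \<alpha> "nat c"] by linarith
    ultimately show ?thesis
      using True \<open>1 \<le> r \<and> _\<close> unfolding p_def by (simp add: le_nat_iff) linarith
  next
    case False
    then have "length \<alpha> \<le> m - 1"
      unfolding m_def by simp
    then show ?thesis
      using False p by simp
  qed
  finally show ?thesis
    using True by auto
next
  case False
  then show ?thesis
    using col_height_le_sum_list[of \<alpha> "nat c"] by (auto simp: Delta_def)
qed

lemma col_height_mono:
  assumes "i \<le> j"
  shows "col_height \<alpha> i \<le> col_height \<alpha> j"
proof -
  have "sum_list (take (length \<alpha> - j) \<alpha>) \<le> sum_list (take (length \<alpha> - i) \<alpha>)"
    using assms by (intro sum_list_take_mono) simp
  then show ?thesis
    using sum_list_take_add_col_height[of \<alpha> i] sum_list_take_add_col_height[of \<alpha> j] by simp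
qed

lemma col_height_strict_mono:
  assumes "is_composition \<alpha>" and "i < j" and "j \<le> length \<alpha>"
  shows "col_height \<alpha> i < col_height \<alpha> j"
proof -
  have "sum_list (take (length \<alpha> - j) \<alpha>) < sum_list (take (length \<alpha> - i) \<alpha>)"
    using assms by (intro sum_list_take_strict_mono) (auto simp: is_composition_def)
  then show ?thesis
    using sum_list_take_add_col_height[of \<alpha> i] sum_list_take_add_col_height[of \<alpha> j] by simp
qed

lemma one_plus_col_height_mem_R_set:
  assumes "1 \<le> j" and "j \<le> length \<alpha>"
  shows "1 + col_height \<alpha> j \<in> R_set \<alpha> k"
proof -
  have "(\<Sum>i=1..j. \<alpha> ! (length \<alpha> - i)) = col_height \<alpha> j"
    using assms(2)
  proof (induction j)
    case (Suc j)
    then have "drop (length \<alpha> - Suc j) \<alpha> = \<alpha> ! (length \<alpha> - Suc j) # drop (length \<alpha> - j) \<alpha>"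
      by (metis Cons_nth_drop_Suc Suc_diff_Suc diff_less less_eq_Suc_le zero_less_Suc order.strict_trans2)
    with Suc show ?case
      by (simp add: col_height_def)
  qed (simp add: col_height_def)
  then show ?thesis
    using assms unfolding R_set_def by force
qed

lemma finite_Delta: "finite (Delta \<alpha>)"
proof (rule finite_subset)
  show "Delta \<alpha> \<subseteq> {1..int (sum_list \<alpha>)} \<times> {1..int (length \<alpha>)}"
  proof
    fix x
    assume "x \<in> Delta \<alpha>"
    then show "x \<in> {1..int (sum_list \<alpha>)} \<times> {1..int (length \<alpha>)}"
      using col_height_le_sum_list[of \<alpha> "nat (snd x)"] by (cases x) (simp add: mem_Delta_iff)
  qed
qed simp

lemma card_col_height_ge_split:
  "card {j \<in> J. u \<le> col_height \<alpha> j}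
     = card {j \<in> J. Suc u \<le> col_height \<alpha> j} + card {j \<in> J. col_height \<alpha> j = u}" if "finite J"
proof -
  have "{j \<in> J. u \<le> col_height \<alpha> j} = {j \<in> J. Suc u \<le> col_height \<alpha> j} \<union> {j \<in> J. col_height \<alpha> j = u}"
    by auto
  then show ?thesis
    using that by (simp, subst card_Un_disjoint) auto
qed

lemma card_col_height_eq_le_1:
  assumes "is_composition \<alpha>"
  shows "card {j \<in> {1..length \<alpha>}. col_height \<alpha> j = u} \<le> 1"
proof -
  have "i = j" if "i \<in> {1..length \<alpha>}" "j \<in> {1..length \<alpha>}" "col_height \<alpha> i = col_height \<alpha> j" for i j
    using that col_height_strict_mono[OF assms, of i j] col_height_strict_mono[OF assms, of j i]
    by (cases i j rule: linorder_cases) auto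
  then show ?thesis
    by (auto simp: card_le_Suc0_iff_eq)
qed

text \<open>The \<open>i\<close>-th cell from the top of each column of \<open>\<Delta>\<^sub>\<alpha>\<close> gets entry \<open>i\<close>.\<close>

definition staircase_entry :: "nat list \<Rightarrow> cell \<Rightarrow> int" where
  "staircase_entry \<alpha> x = fst x + int (col_height \<alpha> (nat (snd x))) - int (sum_list \<alpha>)"

locale staircase_lattice_tableau =
  fixes \<alpha> :: "nat list" and D :: "cell set" and T :: "cell \<Rightarrow> nat"
  assumes finite_shape: "finite D"
    and Delta_subset: "Delta \<alpha> \<subseteq> D"
    and upper_rows: "\<And>x. x \<in> D \<Longrightarrow> fst x \<le> int (sum_list \<alpha>) \<Longrightarrow> x \<in> Delta \<alpha>"
    and ssyt: "is_SSYT D T"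
    and lattice: "is_lattice (reading_word D T)"
begin

lemma entry_pos: "x \<in> D \<Longrightarrow> 0 < T x"
  using ssyt unfolding is_SSYT_def by blast

lemma row_mono: "(r, c) \<in> D \<Longrightarrow> (r, c') \<in> D \<Longrightarrow> c \<le> c' \<Longrightarrow> T (r, c) \<le> T (r, c')"
  using ssyt unfolding is_SSYT_def by (cases "c = c'") auto

lemma column_strict_mono: "(r, c) \<in> D \<Longrightarrow> (r', c) \<in> D \<Longrightarrow> r < r' \<Longrightarrow> T (r, c) < T (r', c)"
  using ssyt unfolding is_SSYT_def by blast

lemma staircase_entry_le:
  assumes "(r, c) \<in> Delta \<alpha>"
  shows "staircase_entry \<alpha> (r, c) \<le> int (T (r, c))"
proof -
  define top where "top = int (sum_list \<alpha>) - int (col_height \<alpha> (nat c))"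
  have "top + 1 \<le> r"
    using assms by (simp add: mem_Delta_iff top_def)
  then have "(r, c) \<in> Delta \<alpha> \<longrightarrow> r - top \<le> int (T (r, c))"
  proof (induction r rule: int_ge_induct)
    case base
    show ?case
      using Delta_subset entry_pos by fastforce
  next
    case (step r)
    show ?case
    proof
      assume below: "(r + 1, c) \<in> Delta \<alpha>"
      then have "(r, c) \<in> Delta \<alpha>"
        using step.hyps by (auto simp: mem_Delta_iff top_def)
      moreover have "T (r, c) < T (r + 1, c)"
        using calculation below Delta_subset by (intro column_strict_mono) auto
      ultimately show "r + 1 - top \<le> int (T (r + 1, c))"
        using step.IH by simp
    qed
  qed
  then show ?thesis
    using assms by (simp add: staircase_entry_def top_def)
qed

lemma shift_down_earlier_cell:
  assumes x: "(r, c) \<in> Delta \<alpha>"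
    and earlier: "\<And>y. y \<in> Delta \<alpha> \<Longrightarrow> reading_key y < reading_key (r, c) \<Longrightarrow> int (T y) = staircase_entry \<alpha> y"
    and y: "(r', c') \<in> D" "reading_key (r', c') \<le> reading_key (r, c)"
    and entries: "Suc (T (r', c')) = T (r, c)" "staircase_entry \<alpha> (r, c) \<le> int (T (r', c'))"
  shows "(r' + 1, c') \<in> D \<and> reading_key (r' + 1, c') < reading_key (r, c) \<and> T (r' + 1, c') = T (r, c)"
proof -
  have x_bounds: "1 \<le> c" "r \<le> int (sum_list \<alpha>)"
    using x by (auto simp: mem_Delta_iff)
  have before: "r' < r \<or> (r' = r \<and> c \<le> c')"
    using y(2) reading_key_le_iff by auto
  then have y_Delta: "(r', c') \<in> Delta \<alpha>"
    using upper_rows[OF y(1)] x_bounds by auto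
  have "r' < r"
  proof (rule ccontr)
    assume "\<not> r' < r"
    then have "T (r, c) \<le> T (r', c')"
      using before row_mono[of r c c'] x y_Delta Delta_subset by auto
    then show False
      using entries(1) by simp
  qed
  then have y_value: "int (T (r', c')) = staircase_entry \<alpha> (r', c')"
    using earlier[OF y_Delta] by (simp add: reading_key_less_iff)
  have below_Delta: "(r' + 1, c') \<in> Delta \<alpha>"
    using y_Delta \<open>r' < r\<close> x_bounds by (simp add: mem_Delta_iff)
  have below_before: "reading_key (r' + 1, c') < reading_key (r, c)"
  proof (cases "r' + 1 = r")
    case True
    then have "col_height \<alpha> (nat c) < col_height \<alpha> (nat c')"
      using y_value entries(2) unfolding staircase_entry_def by simp
    then have "c < c'"
      by (meson col_height_mono nat_mono not_less leD)
    then show ?thesis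
      using True by (simp add: reading_key_less_iff)
  qed (use \<open>r' < r\<close> in \<open>simp add: reading_key_less_iff\<close>)
  have "int (T (r' + 1, c')) = staircase_entry \<alpha> (r' + 1, c')"
    using earlier[OF below_Delta below_before] .
  then have "T (r' + 1, c') = T (r, c)"
    using y_value entries(1) unfolding staircase_entry_def by simp
  then show ?thesis
    using below_Delta Delta_subset below_before by auto
qed

lemma staircase_entry_ge:
  assumes x: "(r, c) \<in> Delta \<alpha>"
    and earlier: "\<And>y. y \<in> Delta \<alpha> \<Longrightarrow> reading_key y < reading_key (r, c) \<Longrightarrow> int (T y) = staircase_entry \<alpha> y"
  shows "int (T (r, c)) \<le> staircase_entry \<alpha> (r, c)"
proof (rule ccontr)
  assume too_large: "\<not> ?thesis"
  define j where "j = T (r, c) - 1"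
  have "0 < staircase_entry \<alpha> (r, c)"
    using x by (simp add: mem_Delta_iff staircase_entry_def)
  then have j: "1 \<le> j" "T (r, c) = Suc j" "staircase_entry \<alpha> (r, c) \<le> int j"
    using too_large unfolding j_def by auto
  define A where "A = {y\<in>D. reading_key y \<le> reading_key (r, c) \<and> T y = j}"
  define B where "B = {y\<in>D. reading_key y \<le> reading_key (r, c) \<and> T y = Suc j}"
  define shift where "shift = (\<lambda>y::cell. (fst y + 1, snd y))"
  have shift_A: "shift y \<in> B - {(r, c)}" if "y \<in> A" for y
    using that shift_down_earlier_cell[OF x earlier, of "fst y" "snd y"] j
    unfolding A_def B_def shift_def by (auto simp: less_le)
  have finite_B: "finite B"
    using finite_shape by (simp add: B_def)
  have "card A = card (shift ` A)"
    by (rule card_image[symmetric]) (simp add: inj_on_def shift_def prod_eq_iff)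
  also have "\<dots> \<le> card (B - {(r, c)})"
    by (intro card_mono image_subsetI finite_Diff finite_B shift_A)
  also have "\<dots> < card B"
    using x Delta_subset j(2) finite_B unfolding B_def
    by (intro card_Diff1_less) auto
  also have "card B \<le> card A"
    unfolding A_def B_def using lattice_count_prefix[OF finite_shape lattice j(1)] .
  finally show False
    by simp
qed

lemma staircase_filling: "x \<in> Delta \<alpha> \<Longrightarrow> int (T x) = staircase_entry \<alpha> x"
proof (induction x rule: measure_induct_rule[where f = "\<lambda>x. card {y \<in> Delta \<alpha>. reading_key y < reading_key x}"])
  case (less x)
  obtain r c where x: "x = (r, c)"
    by (cases x)
  have earlier: "int (T y) = staircase_entry \<alpha> y"
    if "y \<in> Delta \<alpha>" "reading_key y < reading_key (r, c)" for y
  proof (rule less.IH[OF _ that(1)])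
    have "{z \<in> Delta \<alpha>. reading_key z < reading_key y} \<subset> {z \<in> Delta \<alpha>. reading_key z < reading_key x}"
      using that x by auto
    then show "card {z \<in> Delta \<alpha>. reading_key z < reading_key y} < card {z \<in> Delta \<alpha>. reading_key z < reading_key x}"
      by (rule psubset_card_mono[rotated]) (simp add: finite_Delta)
  qed
  show ?case
    using staircase_entry_le[of r c] staircase_entry_ge[of r c, OF _ earlier] less.prems x by force
qed

lemma card_staircase_value:
  assumes "1 \<le> u"
  shows "card {x \<in> Delta \<alpha>. T x = u} = card {j \<in> {1..length \<alpha>}. u \<le> col_height \<alpha> j}"
proof -
  define cell where "cell j = (int (sum_list \<alpha>) - int (col_height \<alpha> j) + int u, int j)" for j
  have "{x \<in> Delta \<alpha>. T x = u} = cell ` {j \<in> {1..length \<alpha>}. u \<le> col_height \<alpha> j}"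
  proof (intro equalityI subsetI)
    fix x
    assume "x \<in> {x \<in> Delta \<alpha>. T x = u}"
    then obtain r c where x: "x = (r, c)" "(r, c) \<in> Delta \<alpha>" "T (r, c) = u"
      by (cases x) auto
    then have "int u = staircase_entry \<alpha> (r, c)"
      using staircase_filling[OF x(2)] by simp
    with x show "x \<in> cell ` {j \<in> {1..length \<alpha>}. u \<le> col_height \<alpha> j}"
      unfolding cell_def staircase_entry_def
      by (intro image_eqI[of _ _ "nat c"]) (auto simp: mem_Delta_iff)
  next
    fix x
    assume "x \<in> cell ` {j \<in> {1..length \<alpha>}. u \<le> col_height \<alpha> j}"
    then obtain j where j: "1 \<le> j" "j \<le> length \<alpha>" "u \<le> col_height \<alpha> j" and x: "x = cell j"
      by auto
    then have x_Delta: "x \<in> Delta \<alpha>"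
      using assms by (simp add: cell_def mem_Delta_iff)
    then have "int (T x) = int u"
      using staircase_filling[OF x_Delta] by (simp add: x cell_def staircase_entry_def)
    with x_Delta show "x \<in> {x \<in> Delta \<alpha>. T x = u}"
      by simp
  qed
  moreover have "inj cell"
    by (simp add: inj_def cell_def)
  ultimately show ?thesis
    by (simp add: card_image inj_on_subset)
qed

abbreviation row_below :: int where
  "row_below \<equiv> int (sum_list \<alpha>) + 1"

lemma finite_row: "finite {c. (r, c) \<in> D \<and> P c}"
  by (rule finite_subset[of _ "snd ` D"]) (force, simp add: finite_shape)

lemma row_below_lattice_bound:
  assumes c0: "(row_below, c0) \<in> D" and w: "w = T (row_below, c0)" "2 \<le> w"
  shows "card {x \<in> Delta \<alpha>. T x = w} + card {c. (row_below, c) \<in> D \<and> c0 \<le> c \<and> T (row_below, c) = w}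
    \<le> card {x \<in> Delta \<alpha>. T x = w - 1}"
proof -
  define S where "S = {c. (row_below, c) \<in> D \<and> c0 \<le> c \<and> T (row_below, c) = w}"
  define A where "A = {y\<in>D. reading_key y \<le> reading_key (row_below, c0) \<and> T y = w - 1}"
  define B where "B = {y\<in>D. reading_key y \<le> reading_key (row_below, c0) \<and> T y = Suc (w - 1)}"
  have A_sub: "A \<subseteq> {x \<in> Delta \<alpha>. T x = w - 1}"
  proof
    fix y
    assume y: "y \<in> A"
    obtain r c where y_rc: "y = (r, c)"
      by (cases y)
    have "r < row_below"
    proof (rule ccontr)
      assume "\<not> r < row_below"
      then have "r = row_below" "c0 \<le> c"
        using y reading_key_le_iff unfolding A_def y_rc by auto
      then show False
        using row_mono[OF c0, of c] y w unfolding A_def y_rc by auto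
    qed
    then show "y \<in> {x \<in> Delta \<alpha>. T x = w - 1}"
      using upper_rows y unfolding A_def y_rc by auto
  qed
  have B_sup: "{x \<in> Delta \<alpha>. T x = w} \<union> (\<lambda>c. (row_below, c)) ` S \<subseteq> B"
    using Delta_subset w(2) reading_key_le_iff
    unfolding B_def S_def by (auto simp: mem_Delta_iff)
  have finite_B: "finite B"
    using finite_shape by (simp add: B_def)
  have "card {x \<in> Delta \<alpha>. T x = w} + card S = card ({x \<in> Delta \<alpha>. T x = w} \<union> (\<lambda>c. (row_below, c)) ` S)"
    using finite_Delta finite_row[of row_below] unfolding S_def
    by (subst card_Un_disjoint) (auto simp: card_image inj_on_def mem_Delta_iff)
  also have "\<dots> \<le> card B"
    using B_sup finite_B by (rule card_mono[rotated])
  also have "\<dots> \<le> card A"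
    unfolding A_def B_def by (rule lattice_count_prefix[OF finite_shape lattice]) (use w in simp)
  also have "\<dots> \<le> card {x \<in> Delta \<alpha>. T x = w - 1}"
    using A_sub finite_Delta by (intro card_mono) auto
  finally show ?thesis
    unfolding S_def .
qed

lemma row_below_repeats_le:
  assumes "(row_below, c0) \<in> D" and w: "w = T (row_below, c0)" "2 \<le> w"
  shows "card {c. (row_below, c) \<in> D \<and> c0 \<le> c \<and> T (row_below, c) = w}
    \<le> card {j \<in> {1..length \<alpha>}. col_height \<alpha> j = w - 1}"
proof -
  have "card {x \<in> Delta \<alpha>. T x = w - 1}
      = card {x \<in> Delta \<alpha>. T x = w} + card {j \<in> {1..length \<alpha>}. col_height \<alpha> j = w - 1}"
    using card_staircase_value[of w] card_staircase_value[of "w - 1"]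
      card_col_height_ge_split[of "{1..length \<alpha>}" "w - 1" \<alpha>] w(2)
    by (simp add: Suc_diff_Suc numeral_2_eq_2)
  then show ?thesis
    using row_below_lattice_bound[OF assms] by simp
qed

lemma row_below_entry_mem:
  assumes "(row_below, c0) \<in> D" and "2 \<le> T (row_below, c0)"
  shows "T (row_below, c0) \<in> (\<lambda>j. 1 + col_height \<alpha> j) ` {1..length \<alpha>}"
proof -
  have "0 < card {c. (row_below, c) \<in> D \<and> c0 \<le> c \<and> T (row_below, c) = T (row_below, c0)}"
    using assms(1) finite_row by (subst card_gt_0_iff) auto
  then have "0 < card {j \<in> {1..length \<alpha>}. col_height \<alpha> j = T (row_below, c0) - 1}"
    using row_below_repeats_le[OF assms(1) refl assms(2)] by linarith
  then have "{j \<in> {1..length \<alpha>}. col_height \<alpha> j = T (row_below, c0) - 1} \<noteq> {}"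
    by (metis card.empty less_irrefl)
  then obtain j where "j \<in> {1..length \<alpha>}" "col_height \<alpha> j = T (row_below, c0) - 1"
    by blast
  then show ?thesis
    using assms(2) by (intro image_eqI[of _ _ j]) auto
qed

lemma row_below_value_card_le_1:
  assumes "is_composition \<alpha>" and "v \<noteq> 1"
  shows "card {c. (row_below, c) \<in> D \<and> T (row_below, c) = v} \<le> 1"
proof -
  define C where "C = {c. (row_below, c) \<in> D \<and> T (row_below, c) = v}"
  have ordered: "c1 = c2" if "c1 \<in> C" "c2 \<in> C" "c1 \<le> c2" for c1 c2
  proof (rule ccontr)
    assume "c1 \<noteq> c2"
    have v: "2 \<le> v"
      using entry_pos[of "(row_below, c1)"] that(1) assms(2) unfolding C_def by auto
    from \<open>c1 \<noteq> c2\<close> have "card {c1, c2} \<le> card {c. (row_below, c) \<in> D \<and> c1 \<le> c \<and> T (row_below, c) = v}"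
      using that finite_row unfolding C_def by (intro card_mono) auto
    also have "\<dots> \<le> card {j \<in> {1..length \<alpha>}. col_height \<alpha> j = v - 1}"
      using row_below_repeats_le[of c1 v] that v unfolding C_def by simp
    also have "\<dots> \<le> 1"
      using card_col_height_eq_le_1[OF assms(1)] .
    finally show False
      using \<open>c1 \<noteq> c2\<close> by simp
  qed
  have "c1 = c2" if "c1 \<in> C" "c2 \<in> C" for c1 c2
    using ordered[OF that] ordered[OF that(2,1)] by (cases "c1 \<le> c2") auto
  moreover have "finite C"
    unfolding C_def by (rule finite_row)
  ultimately have "card C \<le> Suc 0"
    using card_le_Suc0_iff_eq by blast
  then show ?thesis
    unfolding C_def by simp
qed

lemma row_below_entry_ge_2:
  assumes "is_composition \<alpha>" and "(row_below, c) \<in> D" and "1 \<le> c" "c \<le> int (length \<alpha>)"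
  shows "2 \<le> T (row_below, c)"
proof -
  have "col_height \<alpha> 0 < col_height \<alpha> (nat c)"
    using assms by (intro col_height_strict_mono) auto
  then have bottom: "(int (sum_list \<alpha>), c) \<in> Delta \<alpha>"
    using assms by (simp add: mem_Delta_iff col_height_def)
  then have "T (int (sum_list \<alpha>), c) < T (row_below, c)"
    using Delta_subset assms(2) by (intro column_strict_mono) auto
  moreover have "0 < T (int (sum_list \<alpha>), c)"
    using bottom Delta_subset entry_pos by auto
  ultimately show ?thesis
    by simp
qed

end

lemma mem_foundation_row_ge: "(r, c) \<in> foundation lam \<alpha> k \<Longrightarrow> int (sum_list \<alpha>) + 1 \<le> r"
  unfolding foundation_def by auto

lemma mem_foundation_first_row_iff:
  "(int (sum_list \<alpha>) + 1, c) \<in> foundation lam \<alpha> k \<longleftrightarrow>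
     lam \<noteq> [] \<and> 1 - int k \<le> c \<and> c \<le> int (lam ! 0) - int k"
  unfolding foundation_def by (auto simp: Suc_le_eq)

lemma finite_foundation: "finite (foundation lam \<alpha> k)"
proof (rule finite_subset)
  show "foundation lam \<alpha> k \<subseteq> {int (sum_list \<alpha>) + 1 .. int (sum_list \<alpha>) + int (length lam)}
      \<times> {1 - int k .. int (sum_list lam) - int k}"
  proof
    fix x
    assume "x \<in> foundation lam \<alpha> k"
    then obtain r c where x: "x = (r, c)"
      and r: "1 \<le> r - int (sum_list \<alpha>)" "r - int (sum_list \<alpha>) \<le> int (length lam)"
      and c: "1 - int k \<le> c" "c \<le> int (lam ! nat (r - int (sum_list \<alpha>) - 1)) - int k"
      unfolding foundation_def by auto
    have "lam ! nat (r - int (sum_list \<alpha>) - 1) \<le> sum_list lam"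
      using r by (intro elem_le_sum_list) linarith
    then show "x \<in> {int (sum_list \<alpha>) + 1 .. int (sum_list \<alpha>) + int (length lam)}
        \<times> {1 - int k .. int (sum_list lam) - int k}"
      using x r c by simp
  qed
qed simp

lemma staircase_lattice_tableau_fat_staircase:
  assumes "is_SSYT (fat_staircase lam \<alpha> k) T" and "is_lattice (reading_word (fat_staircase lam \<alpha> k) T)"
  shows "staircase_lattice_tableau \<alpha> (fat_staircase lam \<alpha> k) T"
proof
  show "finite (fat_staircase lam \<alpha> k)"
    by (simp add: fat_staircase_def finite_Delta finite_foundation)
  show "x \<in> Delta \<alpha>" if "x \<in> fat_staircase lam \<alpha> k" "fst x \<le> int (sum_list \<alpha>)" for x
    using that by (cases x) (auto simp: fat_staircase_def dest: mem_foundation_row_ge)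
qed (use assms in \<open>auto simp: fat_staircase_def\<close>)

theorem mainTheorem1:
  fixes \<alpha> lam :: "nat list" and k :: nat and T :: "int \<times> int \<Rightarrow> nat"
  assumes "is_composition \<alpha>"
    and "is_partition lam"
    and "lam \<noteq> [] \<longrightarrow> int (lam ! 0) - int k \<le> int (length \<alpha>)"
    and "is_SSYT (fat_staircase lam \<alpha> k) T"
    and "is_lattice (reading_word (fat_staircase lam \<alpha> k) T)"
  shows "(\<forall>c. (int (sum_list \<alpha>) + 1, c) \<in> foundation lam \<alpha> k
              \<longrightarrow> T (int (sum_list \<alpha>) + 1, c) \<in> R_set \<alpha> k)
       \<and> card {c. (int (sum_list \<alpha>) + 1, c) \<in> foundation lam \<alpha> k \<and> T (int (sum_list \<alpha>) + 1, c) = 1} \<le> k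
       \<and> (\<forall>v. v \<noteq> 1 \<longrightarrow>
            card {c. (int (sum_list \<alpha>) + 1, c) \<in> foundation lam \<alpha> k \<and> T (int (sum_list \<alpha>) + 1, c) = v} \<le> 1)"
proof -
  interpret staircase_lattice_tableau \<alpha> "fat_staircase lam \<alpha> k" T
    using assms(4,5) by (rule staircase_lattice_tableau_fat_staircase)
  let ?F = "foundation lam \<alpha> k"
  have in_shape: "(row_below, c) \<in> fat_staircase lam \<alpha> k" if "(row_below, c) \<in> ?F" for c
    using that by (simp add: fat_staircase_def)
  have ones_left: "1 - int k \<le> c \<and> c \<le> 0" if "(row_below, c) \<in> ?F" "T (row_below, c) = 1" for c
    using row_below_entry_ge_2[OF assms(1) in_shape[OF that(1)]] that assms(3)
    by (force simp: mem_foundation_first_row_iff)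
  have entries: "T (row_below, c) \<in> R_set \<alpha> k" if c: "(row_below, c) \<in> ?F" for c
  proof (cases "T (row_below, c) = 1")
    case False
    then have "2 \<le> T (row_below, c)"
      using entry_pos[OF in_shape[OF c]] by simp
    then show ?thesis
      using row_below_entry_mem[OF in_shape[OF c]] one_plus_col_height_mem_R_set by auto
  qed (use ones_left[OF c] in \<open>auto simp: R_set_def\<close>)
  have "card {c. (row_below, c) \<in> ?F \<and> T (row_below, c) = 1} \<le> card {1 - int k .. 0}"
    using ones_left by (intro card_mono) auto
  moreover have "card {c. (row_below, c) \<in> ?F \<and> T (row_below, c) = v}
      \<le> card {c. (row_below, c) \<in> fat_staircase lam \<alpha> k \<and> T (row_below, c) = v}" for v
    using in_shape by (intro card_mono finite_row) auto
  ultimately show ?thesis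
    using entries row_below_value_card_le_1[OF assms(1)] by (simp; blast intro: le_trans)
qed

end
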